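(* Let $G=(V,E,T,c)$ be a $k$-terminal network. For every $S\subset T$ with $S\neq\emptyset,T$ there exist $S_1,\dots,S_m\in\mathcal{T}_e(G)$ ($m\ge1$) such that the sets $E_{S_1},\dots,E_{S_m}$ are pairwise disjoint and $E_S=E_{S_1}\cup\dots\cup E_{S_m}$.
   Context: A $k$-terminal network $G=(V,E,T,c)$ is a finite connected undirected graph $(V,E)$ with edge weights (capacities) $c:E\to\mathbb{R}_{>0}$ and a set $T\subseteq V$ of $|T|=k$ terminals. For $F\subseteq E$ let $c(F)=\sum_{e\in F}c(e)$; for $W\subseteq V$ let $\delta(W)$ be the set of edges with exactly one endpoint in $W$. For $S\subset T$ with $S\neq\emptyset,T$, write $\bar S=T\setminus S$; a cut $(W,V\setminus W)$ is $S$-separating if $W\cap T\in\{S,\bar S\}$, and $\mathrm{mincut}_G(S)$ is the minimum of $c(\delta(W))$ over all $S$-separating cuts. It is assumed (e.g. by a generic perturbation of the weights) that the minimizing cutset is unique; it is denoted $E_S$ (so $E_S=E_{\bar S}$). For $F\subseteq E$, $CC(F)$ denotes the set of vertex sets of connected components of $(V,E\setminus F)$. The cutset $E_S$ is called elementary if $|CC(E_S)|=2$, and $\mathcal{T}_e(G)=\{S\subset T:\ S\neq\emptyset,T,\ |CC(E_S)|=2\}$. *)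

theory Defs
  imports Complex_Main
begin

text \<open>Undirected (simple) graphs: edges are 2-element vertex sets.
  Edge weights c :: 'v set => real.\<close>

definition cut_edges :: "'v set set \<Rightarrow> 'v set \<Rightarrow> 'v set set" where
  "cut_edges E W = {e \<in> E. card (e \<inter> W) = 1}"

definition cap :: "('v set \<Rightarrow> real) \<Rightarrow> 'v set set \<Rightarrow> real" where
  "cap c F = (\<Sum>e\<in>F. c e)"

definition adj :: "'v set set \<Rightarrow> 'v set set \<Rightarrow> ('v \<times> 'v) set" where
  "adj E F = {(u, v). {u, v} \<in> E - F \<and> u \<noteq> v}"

definition reach :: "'v set \<Rightarrow> 'v set set \<Rightarrow> 'v set set \<Rightarrow> 'v \<Rightarrow> 'v \<Rightarrow> bool" where
  "reach V E F u v \<longleftrightarrow> u \<in> V \<and> v \<in> V \<and> (u, v) \<in> (adj E F)\<^sup>*"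

definition CC :: "'v set \<Rightarrow> 'v set set \<Rightarrow> 'v set set \<Rightarrow> 'v set set" where
  "CC V E F = {{v \<in> V. reach V E F u v} | u. u \<in> V}"

definition terminal_network ::
  "'v set \<Rightarrow> 'v set set \<Rightarrow> 'v set \<Rightarrow> ('v set \<Rightarrow> real) \<Rightarrow> bool" where
  "terminal_network V E T c \<longleftrightarrow>
     finite V \<and> (\<forall>e\<in>E. e \<subseteq> V \<and> card e = 2) \<and>
     (\<forall>u\<in>V. \<forall>v\<in>V. reach V E {} u v) \<and>
     (\<forall>e\<in>E. c e > 0) \<and> T \<subseteq> V"

definition proper_sub :: "'v set \<Rightarrow> 'v set \<Rightarrow> bool" where
  "proper_sub T S \<longleftrightarrow> S \<subseteq> T \<and> S \<noteq> {} \<and> S \<noteq> T"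

definition separating :: "'v set \<Rightarrow> 'v set \<Rightarrow> 'v set \<Rightarrow> 'v set \<Rightarrow> bool" where
  "separating V T S W \<longleftrightarrow> W \<subseteq> V \<and> (W \<inter> T = S \<or> W \<inter> T = T - S)"

definition mincut ::
  "'v set \<Rightarrow> 'v set set \<Rightarrow> 'v set \<Rightarrow> ('v set \<Rightarrow> real) \<Rightarrow> 'v set \<Rightarrow> real" where
  "mincut V E T c S = Min ((\<lambda>W. cap c (cut_edges E W)) ` {W. separating V T S W})"

definition min_sep_cut ::
  "'v set \<Rightarrow> 'v set set \<Rightarrow> 'v set \<Rightarrow> ('v set \<Rightarrow> real) \<Rightarrow> 'v set \<Rightarrow> 'v set \<Rightarrow> bool" where
  "min_sep_cut V E T c S W \<longleftrightarrow> separating V T S W \<and>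
     cap c (cut_edges E W) = mincut V E T c S"

definition unique_mincuts ::
  "'v set \<Rightarrow> 'v set set \<Rightarrow> 'v set \<Rightarrow> ('v set \<Rightarrow> real) \<Rightarrow> bool" where
  "unique_mincuts V E T c \<longleftrightarrow> (\<forall>S. proper_sub T S \<longrightarrow>
     (\<forall>W1 W2. min_sep_cut V E T c S W1 \<and> min_sep_cut V E T c S W2 \<longrightarrow>
        cut_edges E W1 = cut_edges E W2))"

definition ES ::
  "'v set \<Rightarrow> 'v set set \<Rightarrow> 'v set \<Rightarrow> ('v set \<Rightarrow> real) \<Rightarrow> 'v set \<Rightarrow> 'v set set" where
  "ES V E T c S = (THE F. \<exists>W. min_sep_cut V E T c S W \<and> F = cut_edges E W)"

text \<open>\<T>_e(G): the sets S whose minimum cutset is elementary.\<close>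
definition Te ::
  "'v set \<Rightarrow> 'v set set \<Rightarrow> 'v set \<Rightarrow> ('v set \<Rightarrow> real) \<Rightarrow> 'v set set" where
  "Te V E T c = {S. proper_sub T S \<and> card (CC V E (ES V E T c S)) = 2}"

end

theory Submission
  imports Defs
begin

text \<open>A nonempty cut \<open>\<delta>(W)\<close> is either a bond, or some component \<open>C\<close> of \<open>G - \<delta>(W)\<close> has
  \<open>\<delta>(C) \<subset> \<delta>(W)\<close>, and then \<open>\<delta>(W)\<close> is the disjoint union of \<open>\<delta>(C)\<close> and \<open>\<delta>(W \<Delta> C)\<close>; induction
  on \<open>|\<delta>(W)|\<close> splits every cut into disjoint bonds. Now let \<open>\<delta>(W) = E\<^sub>S\<close> and let
  \<open>\<delta>(X) \<subseteq> E\<^sub>S\<close> be one of its bonds. Since \<open>\<delta>(W \<Delta> Y) \<subseteq> \<delta>(W) \<union> \<delta>(Y)\<close> for every \<open>Y\<close>, exchanging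
  \<open>\<delta>(X)\<close> for a cheaper cut keeping the terminals of \<open>X\<close> on one side would give a cheaper
  \<open>S\<close>-separating cut. Hence \<open>\<delta>(X)\<close> is the minimum cut for \<open>S' = X \<inter> T\<close>, and \<open>S'\<close> is neither
  empty nor all of \<open>T\<close>, since otherwise \<open>W \<Delta> X\<close> or \<open>W \<Delta> (V - X)\<close> would be an
  \<open>S\<close>-separating cut with cut set \<open>E\<^sub>S - \<delta>(X)\<close>.\<close>

lemma pairwise_disjnt_Un:
  assumes "pairwise disjnt A" "pairwise disjnt B" "disjnt (\<Union>A) (\<Union>B)"
  shows "pairwise disjnt (A \<union> B)"
proof (rule pairwiseI)
  fix X Y assume XY: "X \<in> A \<union> B" "Y \<in> A \<union> B" "X \<noteq> Y"
  show "disjnt X Y"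
  proof (cases "X \<in> A \<longleftrightarrow> Y \<in> A")
    case True
    then have "X \<in> A \<and> Y \<in> A \<or> X \<in> B \<and> Y \<in> B" using XY by blast
    then show ?thesis using assms(1,2) XY(3) by (metis pairwiseD)
  next
    case False
    then have "X \<in> A \<and> Y \<in> B \<or> X \<in> B \<and> Y \<in> A" using XY by blast
    then show ?thesis using assms(3)
      by (meson Union_upper disjnt_subset1 disjnt_subset2 disjnt_sym)
  qed
qed

lemma cut_edges_doubleton_iff:
  "p \<noteq> q \<Longrightarrow> {p, q} \<in> cut_edges E W \<longleftrightarrow> {p, q} \<in> E \<and> (p \<in> W \<longleftrightarrow> q \<notin> W)"
  unfolding cut_edges_def by (cases "p \<in> W"; cases "q \<in> W") auto

lemma cut_edges_subset: "cut_edges E W \<subseteq> E"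
  by (simp add: cut_edges_def)

lemma sym_adj: "sym (adj E F)"
  by (auto simp: adj_def sym_def insert_commute)

lemma rtrancl_adj_sym: "(u, v) \<in> (adj E F)\<^sup>* \<Longrightarrow> (v, u) \<in> (adj E F)\<^sup>*"
  using sym_rtrancl[OF sym_adj] by (rule symD)

lemma rtrancl_adj_cut_edges_same_side:
  assumes "(u, v) \<in> (adj E (cut_edges E W))\<^sup>*"
  shows "u \<in> W \<longleftrightarrow> v \<in> W"
  using assms
proof (induction rule: rtrancl_induct)
  case (step y z)
  then have "{y, z} \<in> E" "{y, z} \<notin> cut_edges E W" "y \<noteq> z" by (auto simp: adj_def)
  with step.IH show ?case using cut_edges_doubleton_iff[of y z E W] by auto
qed simp

definition component :: "'v set \<Rightarrow> 'v set set \<Rightarrow> 'v set set \<Rightarrow> 'v \<Rightarrow> 'v set" where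
  "component V E F u = {v \<in> V. reach V E F u v}"

lemma CC_eq_component_image: "CC V E F = component V E F ` V"
  by (auto simp: CC_def component_def)

lemma self_in_component: "u \<in> V \<Longrightarrow> u \<in> component V E F u"
  by (simp add: component_def reach_def)

lemma component_eq: "v \<in> component V E F u \<Longrightarrow> component V E F v = component V E F u"
  unfolding component_def reach_def by (auto intro: rtrancl_trans dest: rtrancl_adj_sym)

text \<open>Bonds are the elementary cutsets of the paper.\<close>

definition bond :: "'v set \<Rightarrow> 'v set set \<Rightarrow> 'v set set \<Rightarrow> bool" where
  "bond V E B \<longleftrightarrow> B \<noteq> {} \<and> (\<exists>X \<subseteq> V. B = cut_edges E X) \<and> card (CC V E B) = 2"

locale connected_graph =
  fixes V :: "'v set" and E :: "'v set set"
  assumes finite_vertices: "finite V"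
    and edge_subset: "e \<in> E \<Longrightarrow> e \<subseteq> V"
    and card_edge: "e \<in> E \<Longrightarrow> card e = 2"
    and connected: "u \<in> V \<Longrightarrow> v \<in> V \<Longrightarrow> reach V E {} u v"
begin

lemma finite_edges: "finite E"
  using finite_vertices edge_subset by (meson PowI finite_Pow_iff finite_subset subsetI)

lemma edgeE:
  assumes "e \<in> E"
  obtains p q where "e = {p, q}" "p \<noteq> q" "p \<in> V" "q \<in> V"
  using card_edge[OF assms] edge_subset[OF assms] by (auto simp: card_2_iff)

lemma cut_edgeE:
  assumes "e \<in> cut_edges E W"
  obtains p q where "e = {p, q}" "p \<noteq> q" "p \<in> V" "q \<in> V" "e \<in> E" "p \<in> W \<longleftrightarrow> q \<notin> W"
proof -
  have "e \<in> E" using assms by (simp add: cut_edges_def)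
  then obtain p q where pq: "e = {p, q}" "p \<noteq> q" "p \<in> V" "q \<in> V" by (rule edgeE)
  with assms have "p \<in> W \<longleftrightarrow> q \<notin> W" using cut_edges_doubleton_iff[of p q E W] by simp
  with pq \<open>e \<in> E\<close> show thesis by (rule that)
qed

lemma cut_edges_complement: "cut_edges E (V - X) = cut_edges E X"
proof -
  have "e \<in> cut_edges E (V - X) \<longleftrightarrow> e \<in> cut_edges E X" for e
  proof (cases "e \<in> E")
    case True
    then obtain p q where "e = {p, q}" "p \<noteq> q" "p \<in> V" "q \<in> V" by (rule edgeE)
    with True show ?thesis using cut_edges_doubleton_iff[of p q E] by auto
  qed (simp add: cut_edges_def)
  then show ?thesis by blast
qed

lemma cut_edges_symdiff:
  "cut_edges E (sym_diff A B) = sym_diff (cut_edges E A) (cut_edges E B)"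
proof -
  have "e \<in> cut_edges E (sym_diff A B) \<longleftrightarrow> e \<in> sym_diff (cut_edges E A) (cut_edges E B)" for e
  proof (cases "e \<in> E")
    case True
    then obtain p q where "e = {p, q}" "p \<noteq> q" by (rule edgeE)
    with True show ?thesis
      using cut_edges_doubleton_iff[of p q E] by auto
  qed (simp add: cut_edges_def)
  then show ?thesis by blast
qed

lemma cut_edges_component_subset: "cut_edges E (component V E F u) \<subseteq> F"
proof
  fix e assume e: "e \<in> cut_edges E (component V E F u)"
  then obtain p q where pq: "e = {p, q}" "p \<noteq> q" "p \<in> V" "q \<in> V" "e \<in> E"
    and side: "p \<in> component V E F u \<longleftrightarrow> q \<notin> component V E F u"
    by (rule cut_edgeE) blast
  show "e \<in> F"
  proof (rule ccontr)
    assume "e \<notin> F"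
    then have "(p, q) \<in> adj E F" "(q, p) \<in> adj E F" using pq by (auto simp: adj_def insert_commute)
    then have "p \<in> component V E F u \<longleftrightarrow> q \<in> component V E F u"
      using pq unfolding component_def reach_def by (auto intro: rtrancl_into_rtrancl)
    with side show False by blast
  qed
qed

lemma cut_edges_nonempty:
  assumes "a \<in> X" "b \<in> V - X" "a \<in> V"
  shows "cut_edges E X \<noteq> {}"
proof
  assume "cut_edges E X = {}"
  moreover have "(a, b) \<in> (adj E {})\<^sup>*" using connected assms by (auto simp: reach_def)
  ultimately have "a \<in> X \<longleftrightarrow> b \<in> X" using rtrancl_adj_cut_edges_same_side by metis
  with assms show False by simp
qed

lemma bond_if_all_component_cuts_eq:
  assumes W: "W \<subseteq> V" "cut_edges E W \<noteq> {}"
    and all: "\<And>u. u \<in> V \<Longrightarrow> cut_edges E (component V E (cut_edges E W) u) = cut_edges E W"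
  shows "bond V E (cut_edges E W)"
proof -
  define F where "F = cut_edges E W"
  obtain e where e: "e \<in> F" using W F_def by blast
  then obtain p q where pq: "e = {p, q}" "p \<noteq> q" "p \<in> V" "q \<in> V"
    and side: "p \<in> W \<longleftrightarrow> q \<notin> W"
    unfolding F_def by (rule cut_edgeE) blast
  have "q \<notin> component V E F p"
  proof
    assume "q \<in> component V E F p"
    then have "(p, q) \<in> (adj E F)\<^sup>*" by (simp add: component_def reach_def)
    then have "p \<in> W \<longleftrightarrow> q \<in> W" unfolding F_def by (rule rtrancl_adj_cut_edges_same_side)
    with side show False by blast
  qed
  then have distinct: "component V E F p \<noteq> component V E F q"
    using self_in_component[OF pq(4)] by metis
  have member: "X \<in> {component V E F p, component V E F q}"
    if u: "u \<in> V" "X = component V E F u" for X u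
  proof -
    have "cut_edges E X = F" unfolding u(2) F_def by (rule all[OF u(1)])
    with e have "e \<in> cut_edges E X" by simp
    then have "p \<in> X \<or> q \<in> X" using cut_edges_doubleton_iff[of p q E X] pq(1,2) by simp
    then show ?thesis using component_eq[of _ V E F u] unfolding u(2) by blast
  qed
  have "component V E F ` V = {component V E F p, component V E F q}"
  proof
    show "component V E F ` V \<subseteq> {component V E F p, component V E F q}"
      using member by blast
    show "{component V E F p, component V E F q} \<subseteq> component V E F ` V"
      using pq(3,4) by blast
  qed
  with distinct have "card (CC V E F) = 2" by (simp add: CC_eq_component_image)
  then show ?thesis using W unfolding bond_def F_def by (intro conjI exI[of _ W]) simp_all
qed

lemma cut_edges_split_at_component:
  assumes W: "W \<subseteq> V" "cut_edges E W \<noteq> {}" and u: "u \<in> V"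
    and C: "C = component V E (cut_edges E W) u"
    and proper: "cut_edges E C \<noteq> cut_edges E W"
  shows "cut_edges E C \<noteq> {}" "cut_edges E C \<subset> cut_edges E W"
    "cut_edges E (sym_diff W C) = cut_edges E W - cut_edges E C"
proof -
  have sub: "cut_edges E C \<subseteq> cut_edges E W" unfolding C by (rule cut_edges_component_subset)
  obtain p q where pq: "p \<in> V" "q \<in> V" and side: "p \<in> W \<longleftrightarrow> q \<notin> W"
    using W(2) by (metis cut_edgeE ex_in_conv)
  have "\<not> (p \<in> C \<and> q \<in> C)"
  proof
    assume "p \<in> C \<and> q \<in> C"
    then have "(u, p) \<in> (adj E (cut_edges E W))\<^sup>*" "(u, q) \<in> (adj E (cut_edges E W))\<^sup>*"
      by (auto simp: C component_def reach_def)
    with side show False using rtrancl_adj_cut_edges_same_side by metis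
  qed
  then show "cut_edges E C \<noteq> {}"
    using cut_edges_nonempty[of u C] self_in_component[OF u] pq u C by blast
  with sub show "cut_edges E (sym_diff W C) = cut_edges E W - cut_edges E C"
    using cut_edges_symdiff[of W C] by blast
  show "cut_edges E C \<subset> cut_edges E W" using sub proper by blast
qed

theorem cut_decomposes_into_bonds:
  assumes "W \<subseteq> V" "cut_edges E W \<noteq> {}"
  shows "\<exists>BB. \<Union>BB = cut_edges E W \<and> (\<forall>B\<in>BB. bond V E B) \<and> pairwise disjnt BB"
  using assms
proof (induction "card (cut_edges E W)" arbitrary: W rule: less_induct)
  case less
  show ?case
  proof (cases "\<exists>u\<in>V. cut_edges E (component V E (cut_edges E W) u) \<noteq> cut_edges E W")
    case True
    then obtain u where u: "u \<in> V"
      and proper: "cut_edges E (component V E (cut_edges E W) u) \<noteq> cut_edges E W" by blast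
    define C where "C = component V E (cut_edges E W) u"
    note split = cut_edges_split_at_component[OF less.prems u C_def proper[folded C_def]]
    have finite: "finite (cut_edges E W)" using finite_edges by (simp add: cut_edges_def)
    have CV: "C \<subseteq> V" and DV: "sym_diff W C \<subseteq> V"
      using less.prems(1) by (auto simp: C_def component_def)
    have smaller: "card (cut_edges E C) < card (cut_edges E W)"
      "card (cut_edges E (sym_diff W C)) < card (cut_edges E W)"
      using psubset_card_mono[OF finite] split by auto
    have "cut_edges E (sym_diff W C) \<noteq> {}" using split by blast
    then obtain BB2 where
      BB2: "\<Union>BB2 = cut_edges E (sym_diff W C)" "\<forall>B\<in>BB2. bond V E B" "pairwise disjnt BB2"
      using less.hyps[OF smaller(2) DV] by blast
    obtain BB1 where
      BB1: "\<Union>BB1 = cut_edges E C" "\<forall>B\<in>BB1. bond V E B" "pairwise disjnt BB1"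
      using less.hyps[OF smaller(1) CV split(1)] by blast
    have "disjnt (\<Union>BB1) (\<Union>BB2)" using BB1(1) BB2(1) split(3) by (simp add: disjnt_def)
    with BB1(3) BB2(3) have "pairwise disjnt (BB1 \<union> BB2)" by (rule pairwise_disjnt_Un)
    moreover have "\<Union>(BB1 \<union> BB2) = cut_edges E W"
      using BB1(1) BB2(1) split(2,3) by auto
    ultimately show ?thesis using BB1(2) BB2(2) by (intro exI[of _ "BB1 \<union> BB2"]) auto
  next
    case False
    have "bond V E (cut_edges E W)"
      by (rule bond_if_all_component_cuts_eq[OF less.prems]) (use False in blast)
    then show ?thesis by (intro exI[of _ "{cut_edges E W}"]) auto
  qed
qed

end

lemma finite_separating: "finite V \<Longrightarrow> finite {W. separating V T S W}"
  by (rule finite_subset[of _ "Pow V"]) (auto simp: separating_def)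

lemma mincut_le:
  "finite V \<Longrightarrow> separating V T S W \<Longrightarrow> mincut V E T c S \<le> cap c (cut_edges E W)"
  unfolding mincut_def by (rule Min_le) (auto intro: finite_separating)

lemma min_sep_cut_exists:
  assumes "finite V" "separating V T S W"
  shows "\<exists>W'. min_sep_cut V E T c S W'"
proof -
  let ?caps = "(\<lambda>W. cap c (cut_edges E W)) ` {W. separating V T S W}"
  have "Min ?caps \<in> ?caps" using assms by (intro Min_in) (auto intro: finite_separating)
  then show ?thesis unfolding min_sep_cut_def mincut_def by auto
qed

lemma ES_eqI:
  assumes "unique_mincuts V E T c" "proper_sub T S" "min_sep_cut V E T c S W"
  shows "ES V E T c S = cut_edges E W"
  unfolding ES_def
proof (rule the_equality)
  fix F assume "\<exists>W'. min_sep_cut V E T c S W' \<and> F = cut_edges E W'"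
  then show "F = cut_edges E W" using assms unfolding unique_mincuts_def by blast
qed (use assms(3) in blast)

locale terminal_net = connected_graph +
  fixes T :: "'v set" and c :: "'v set \<Rightarrow> real"
  assumes terminals_subset: "T \<subseteq> V"
    and capacity_pos: "e \<in> E \<Longrightarrow> c e > 0"
begin

lemma cap_Diff: "A \<subseteq> B \<Longrightarrow> B \<subseteq> E \<Longrightarrow> cap c (B - A) = cap c B - cap c A"
  unfolding cap_def using finite_edges by (intro sum_diff) (auto intro: finite_subset)

lemma cap_pos: "A \<subseteq> E \<Longrightarrow> A \<noteq> {} \<Longrightarrow> cap c A > 0"
  unfolding cap_def using finite_edges capacity_pos by (intro sum_pos) (auto intro: finite_subset)

lemma cap_mono: "A \<subseteq> B \<Longrightarrow> B \<subseteq> E \<Longrightarrow> cap c A \<le> cap c B"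
  unfolding cap_def using finite_edges capacity_pos
  by (intro sum_mono2) (auto intro: finite_subset less_imp_le)

lemma cap_Un_le:
  assumes "A \<subseteq> E" "B \<subseteq> E"
  shows "cap c (A \<union> B) \<le> cap c A + cap c B"
proof -
  have "finite A" "finite B" using assms finite_edges by (auto intro: finite_subset)
  moreover have "0 \<le> cap c (A \<inter> B)"
    unfolding cap_def using assms capacity_pos by (intro sum_nonneg) (auto intro: less_imp_le)
  ultimately show ?thesis unfolding cap_def by (simp add: sum_Un)
qed

lemma min_sep_cut_on_side:
  assumes "separating V T S X" "S \<subseteq> T"
  obtains Y where "min_sep_cut V E T c S Y" "Y \<inter> T = S"
proof -
  obtain Y where Y: "min_sep_cut V E T c S Y" using min_sep_cut_exists[OF finite_vertices assms(1)] by blast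
  show thesis
  proof (cases "Y \<inter> T = S")
    case False
    then have "(V - Y) \<inter> T = S"
      using Y assms(2) terminals_subset by (auto simp: min_sep_cut_def separating_def)
    moreover from this have "min_sep_cut V E T c S (V - Y)"
      using Y by (simp add: min_sep_cut_def separating_def cut_edges_complement)
    ultimately show thesis using that by blast
  qed (use Y that in blast)
qed

lemma cut_edges_nonempty_if_separating:
  assumes "proper_sub T S" "separating V T S W"
  shows "cut_edges E W \<noteq> {}"
proof -
  obtain a b where ab: "a \<in> S" "b \<in> T - S" using assms(1) by (auto simp: proper_sub_def)
  moreover have "S \<subseteq> T" using assms(1) by (simp add: proper_sub_def)
  ultimately have "a \<in> V" "b \<in> V" using terminals_subset by auto
  moreover have "a \<in> W \<longleftrightarrow> b \<notin> W" using assms(2) ab \<open>S \<subseteq> T\<close> unfolding separating_def by blast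
  ultimately show ?thesis using cut_edges_nonempty[of a W b] cut_edges_nonempty[of b W a] by blast
qed

lemma terminal_free_subcut_of_min_sep_cut_empty:
  assumes W: "min_sep_cut V E T c S W"
    and Y: "Y \<subseteq> V" "Y \<inter> T = {}" "cut_edges E Y \<subseteq> cut_edges E W"
  shows "cut_edges E Y = {}"
proof (rule ccontr)
  assume nonempty: "cut_edges E Y \<noteq> {}"
  have "sym_diff W Y \<inter> T = W \<inter> T" using Y(2) by blast
  then have "separating V T S (sym_diff W Y)" using W Y(1) by (auto simp: min_sep_cut_def separating_def)
  then have "cap c (cut_edges E W) \<le> cap c (cut_edges E (sym_diff W Y))"
    using W mincut_le[OF finite_vertices] by (simp add: min_sep_cut_def)
  also have "cut_edges E (sym_diff W Y) = cut_edges E W - cut_edges E Y"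
    using cut_edges_symdiff[of W Y] Y(3) by blast
  also have "cap c \<dots> = cap c (cut_edges E W) - cap c (cut_edges E Y)"
    using Y(3) cut_edges_subset by (rule cap_Diff)
  finally show False using cap_pos[OF cut_edges_subset nonempty] by simp
qed

lemma min_sep_cut_of_subcut:
  assumes W: "min_sep_cut V E T c S W"
    and X: "X \<subseteq> V" "cut_edges E X \<subseteq> cut_edges E W"
  shows "min_sep_cut V E T c (X \<inter> T) X"
proof -
  have sepX: "separating V T (X \<inter> T) X" using X(1) by (simp add: separating_def)
  then obtain Y where Y: "min_sep_cut V E T c (X \<inter> T) Y" "Y \<inter> T = X \<inter> T"
    by (rule min_sep_cut_on_side) simp
  define Z where "Z = sym_diff Y (sym_diff W X)"
  have "Z \<inter> T = W \<inter> T" using Y(2) by (auto simp: Z_def)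
  then have "separating V T S Z" using W X(1) Y(1) by (auto simp: Z_def min_sep_cut_def separating_def)
  then have "cap c (cut_edges E W) \<le> cap c (cut_edges E Z)"
    using W mincut_le[OF finite_vertices] by (simp add: min_sep_cut_def)
  also have "\<dots> \<le> cap c (cut_edges E Y \<union> (cut_edges E W - cut_edges E X))"
    using cut_edges_symdiff[of Y "sym_diff W X"] cut_edges_symdiff[of W X] X(2)
      cut_edges_subset[of E Y] cut_edges_subset[of E W]
    by (intro cap_mono) (auto simp: Z_def)
  also have "\<dots> \<le> cap c (cut_edges E Y) + cap c (cut_edges E W - cut_edges E X)"
    using cut_edges_subset by (intro cap_Un_le) auto
  also have "cap c (cut_edges E W - cut_edges E X) = cap c (cut_edges E W) - cap c (cut_edges E X)"
    using X(2) cut_edges_subset by (rule cap_Diff)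
  finally have "cap c (cut_edges E X) \<le> mincut V E T c (X \<inter> T)"
    using Y(1) by (simp add: min_sep_cut_def)
  then have "cap c (cut_edges E X) = mincut V E T c (X \<inter> T)"
    using mincut_le[OF finite_vertices sepX, of E c] by linarith
  with sepX show ?thesis by (simp add: min_sep_cut_def)
qed

lemma bond_in_min_sep_cut_is_ES:
  assumes unique: "unique_mincuts V E T c" and W: "min_sep_cut V E T c S W"
    and B: "bond V E B" "B \<subseteq> cut_edges E W"
  shows "\<exists>S'\<in>Te V E T c. ES V E T c S' = B"
proof -
  obtain X where X: "X \<subseteq> V" "B = cut_edges E X" and "B \<noteq> {}" "card (CC V E B) = 2"
    using B(1) by (auto simp: bond_def)
  have "X \<inter> T \<noteq> {}"
    using terminal_free_subcut_of_min_sep_cut_empty[OF W X(1)] B(2) X(2) \<open>B \<noteq> {}\<close> by blast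
  moreover have "X \<inter> T \<noteq> T"
  proof
    assume "X \<inter> T = T"
    then have "(V - X) \<inter> T = {}" by blast
    then show False using terminal_free_subcut_of_min_sep_cut_empty[OF W, of "V - X"] B(2) X(2) \<open>B \<noteq> {}\<close>
      by (simp add: cut_edges_complement)
  qed
  ultimately have proper: "proper_sub T (X \<inter> T)" by (simp add: proper_sub_def)
  have "ES V E T c (X \<inter> T) = B"
    using ES_eqI[OF unique proper min_sep_cut_of_subcut[OF W X(1)]] B(2) X(2) by simp
  with proper \<open>card (CC V E B) = 2\<close> show ?thesis by (auto simp: Te_def)
qed

lemma min_sep_cut_decomposes_into_elementary:
  assumes unique: "unique_mincuts V E T c" and S: "proper_sub T S"
    and W: "min_sep_cut V E T c S W"
  obtains BB where "finite BB" "BB \<noteq> {}" "\<Union>BB = cut_edges E W" "pairwise disjnt BB"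
    "\<forall>B\<in>BB. \<exists>S'\<in>Te V E T c. ES V E T c S' = B"
proof -
  have sepW: "separating V T S W" using W by (simp add: min_sep_cut_def)
  then have "W \<subseteq> V" by (simp add: separating_def)
  moreover from S sepW have nonempty: "cut_edges E W \<noteq> {}"
    by (rule cut_edges_nonempty_if_separating)
  ultimately obtain BB where BB: "\<Union>BB = cut_edges E W" "\<forall>B\<in>BB. bond V E B" "pairwise disjnt BB"
    by (metis cut_decomposes_into_bonds)
  have "finite (cut_edges E W)" using finite_edges cut_edges_subset by (rule finite_subset[rotated])
  moreover have "BB \<subseteq> Pow (cut_edges E W)" using BB(1) by blast
  ultimately have "finite BB" by (simp add: finite_subset)
  moreover have "BB \<noteq> {}" using BB(1) nonempty by auto
  moreover have "\<forall>B\<in>BB. \<exists>S'\<in>Te V E T c. ES V E T c S' = B"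
  proof
    fix B assume "B \<in> BB"
    then show "\<exists>S'\<in>Te V E T c. ES V E T c S' = B"
      using bond_in_min_sep_cut_is_ES[OF unique W] BB(1,2) by blast
  qed
  ultimately show thesis using BB(1,3) that by blast
qed

end

lemma terminal_net_if_terminal_network: "terminal_network V E T c \<Longrightarrow> terminal_net V E T c"
  unfolding terminal_network_def by unfold_locales auto

lemma obtain_list_indexing_disjoint_family:
  assumes "finite BB" "pairwise disjnt BB" "\<forall>B\<in>BB. \<exists>x\<in>P. f x = B"
  obtains xs where "set xs \<subseteq> P" "length xs = card BB"
    "\<forall>i<length xs. \<forall>j<length xs. i \<noteq> j \<longrightarrow> f (xs ! i) \<inter> f (xs ! j) = {}"
    "(\<Union>i<length xs. f (xs ! i)) = \<Union>BB"
proof -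
  obtain g where g: "\<And>B. B \<in> BB \<Longrightarrow> g B \<in> P \<and> f (g B) = B" using assms(3) by metis
  obtain ys where ys: "set ys = BB" "distinct ys" using finite_distinct_list[OF assms(1)] by blast
  have f_g: "f (map g ys ! i) = ys ! i" if "i < length ys" for i
  proof -
    have "ys ! i \<in> BB" using ys(1) nth_mem[OF that] by blast
    with that show ?thesis using g by simp
  qed
  show thesis
  proof (rule that)
    show "set (map g ys) \<subseteq> P" using g ys(1) by auto
    show "length (map g ys) = card BB" using ys distinct_card by fastforce
    show "\<forall>i<length (map g ys). \<forall>j<length (map g ys). i \<noteq> j \<longrightarrow>
        f (map g ys ! i) \<inter> f (map g ys ! j) = {}"
    proof (intro allI impI)
      fix i j assume ij: "i < length (map g ys)" "j < length (map g ys)" "i \<noteq> j"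
      then have "ys ! i \<noteq> ys ! j" "ys ! i \<in> BB" "ys ! j \<in> BB"
        using ys by (auto simp: nth_eq_iff_index_eq)
      then show "f (map g ys ! i) \<inter> f (map g ys ! j) = {}"
        using assms(2) ij f_g by (simp add: pairwise_def disjnt_def)
    qed
    have "(\<Union>i<length (map g ys). f (map g ys ! i)) = (\<Union>i<length ys. ys ! i)" using f_g by simp
    also have "\<dots> = \<Union>BB" using ys(1) by (auto simp: set_conv_nth)
    finally show "(\<Union>i<length (map g ys). f (map g ys ! i)) = \<Union>BB" .
  qed
qed

theorem theorem2p5:
  fixes V :: "'v set" and E :: "'v set set" and T :: "'v set" and c :: "'v set \<Rightarrow> real"
  assumes "terminal_network V E T c"
    and "unique_mincuts V E T c"
    and "proper_sub T S"
  shows "\<exists>Ss :: 'v set list. Ss \<noteq> [] \<and> set Ss \<subseteq> Te V E T c \<and>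
           (\<forall>i < length Ss. \<forall>j < length Ss. i \<noteq> j \<longrightarrow>
              ES V E T c (Ss ! i) \<inter> ES V E T c (Ss ! j) = {}) \<and>
           ES V E T c S = (\<Union>i < length Ss. ES V E T c (Ss ! i))"
proof -
  interpret terminal_net V E T c using assms(1) by (rule terminal_net_if_terminal_network)
  have "separating V T S S" using assms(3) terminals_subset by (auto simp: separating_def proper_sub_def)
  then obtain W where W: "min_sep_cut V E T c S W"
    using min_sep_cut_exists[OF finite_vertices] by blast
  then obtain BB where BB: "finite BB" "BB \<noteq> {}" "\<Union>BB = cut_edges E W" "pairwise disjnt BB"
    "\<forall>B\<in>BB. \<exists>S'\<in>Te V E T c. ES V E T c S' = B"
    using min_sep_cut_decomposes_into_elementary[OF assms(2,3)] by blast
  obtain Ss where Ss: "set Ss \<subseteq> Te V E T c" "length Ss = card BB"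
    "\<forall>i<length Ss. \<forall>j<length Ss. i \<noteq> j \<longrightarrow> ES V E T c (Ss ! i) \<inter> ES V E T c (Ss ! j) = {}"
    "(\<Union>i<length Ss. ES V E T c (Ss ! i)) = \<Union>BB"
    by (rule obtain_list_indexing_disjoint_family[OF BB(1,4,5)])
  have "Ss \<noteq> []" using Ss(2) BB(1,2) by auto
  moreover have "ES V E T c S = cut_edges E W" using W by (rule ES_eqI[OF assms(2,3)])
  ultimately show ?thesis using Ss(1,3,4) BB(3) by (intro exI[of _ Ss]) simp
qed

end
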